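(* Let $n\ge 2$, and let $l\ge1$, $\mu\ge 0$ be integers with $l+\mu\le n$. For $j=1,\dots,n-1$ put $b_j=-j/(n-j)$. Then the Schur–Szegő composition (of degree-$n$ polynomials) $$U:=\underbrace{(x+1)^{n-1}x*\cdots*(x+1)^{n-1}x}_{l\text{ factors}}*(x+1)^{n-1}(x+b_1)*\cdots*(x+1)^{n-1}(x+b_\mu)$$ is a polynomial with a root of multiplicity $\mu+1$ at $0$, a root of multiplicity $n-\mu-l$ at $-1$, and $l-1$ simple roots belonging to the interval $(-1,0)$.
   Context: Schur–Szegő composition of degree-$n$ polynomials: for $A=\sum_{j=0}^n\binom{n}{j}\alpha_jx^j$ and $B=\sum_{j=0}^n\binom{n}{j}\beta_jx^j$ one sets $A*B=\sum_{j=0}^n\binom{n}{j}\alpha_j\beta_jx^j$; it is commutative and associative, and the composition of several polynomials multiplies the corresponding coefficients. All polynomials are composed as degree-$n$ polynomials (the factor $(x+1)^{n-1}x$ has degree $n$). *)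

theory Defs
  imports "HOL-Computational_Algebra.Polynomial"
begin

text \<open>Schur-Szego composition of two polynomials, both regarded as degree-n polynomials:
  if A = sum_j (n choose j) alpha_j x^j and B = sum_j (n choose j) beta_j x^j then
  A * B = sum_j (n choose j) alpha_j beta_j x^j, i.e. the j-th coefficient is
  coeff A j * coeff B j / (n choose j).\<close>
definition ss_comp :: "nat \<Rightarrow> real poly \<Rightarrow> real poly \<Rightarrow> real poly" where
  "ss_comp n A B = (\<Sum>j\<le>n. monom (coeff A j * coeff B j / real (n choose j)) j)"

text \<open>Composition of a list of degree-n polynomials; the neutral element is (x+1)^n
  (all alpha_j = 1).\<close>
definition ss_comp_list :: "nat \<Rightarrow> real poly list \<Rightarrow> real poly" where
  "ss_comp_list n ps = foldr (ss_comp n) ps ([:1, 1:] ^ n)"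

definition bcoef :: "nat \<Rightarrow> nat \<Rightarrow> real" where
  "bcoef n j = - real j / (real n - real j)"

definition ss_factor :: "nat \<Rightarrow> real \<Rightarrow> real poly" where
  "ss_factor n b = [:1, 1:] ^ (n - 1) * [:b, 1:]"

end

theory Submission
  imports Defs
begin

text \<open>The j-th normalized coefficient (coefficient divided by \<open>n choose j\<close>) of a Schur-Szego
  composition is the product of those of the factors, and for \<open>(x+1)^(n-1) (x+b)\<close> it equals
  \<open>(j + b (n - j)) / n\<close>: this is \<open>j/n\<close> for \<open>b = 0\<close> and \<open>(j - k)/(n - k)\<close> for \<open>b = b_k\<close>. Hence
  \<open>U\<close> is, up to a constant factor, \<open>\<theta>^(l-1)\<close> applied to \<open>x^(\<mu>+1) (x+1)^(n-\<mu>-1)\<close>, where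
  \<open>\<theta> = x d/dx\<close> multiplies the j-th coefficient by j. Each application of \<open>\<theta>\<close> keeps the
  multiplicity of the root 0, lowers that of -1 by one and, by Rolle's theorem applied between
  consecutive roots in \<open>[-1, 0]\<close>, produces one more root in \<open>(-1, 0)\<close>. Since the degree does not
  grow, counting multiplicities shows that there are no further roots and that the roots in
  \<open>(-1, 0)\<close> are simple.\<close>

lemma coeff_one_plus_x_power:
  "coeff ([:1, 1:] ^ n :: 'a::comm_semiring_1 poly) i = of_nat (n choose i)"
proof (cases "i \<le> n")
  case True
  then show ?thesis by (simp add: coeff_linear_poly_power)
next
  case False
  have "degree ([:1, 1:] ^ n :: 'a poly) \<le> n"
    using degree_power_le[of "[:1, 1:] :: 'a poly" n] by simp
  with False show ?thesis by (simp add: coeff_eq_0 binomial_eq_0)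
qed

lemma coeff_ss_comp:
  "coeff (ss_comp n A B) j = (if j \<le> n then coeff A j * coeff B j / real (n choose j) else 0)"
  unfolding ss_comp_def by (simp add: coeff_sum coeff_monom)

lemma coeff_ss_comp_list:
  "coeff (ss_comp_list n ps) j =
     (if j \<le> n then real (n choose j) * (\<Prod>p\<leftarrow>ps. coeff p j / real (n choose j)) else 0)"
proof (induction ps)
  case Nil
  then show ?case by (simp add: ss_comp_list_def coeff_one_plus_x_power)
next
  case (Cons p ps)
  then show ?case by (simp add: ss_comp_list_def coeff_ss_comp)
qed

lemma coeff_ss_factor:
  assumes "1 \<le> n" "j \<le> n"
  shows "coeff (ss_factor n b) j / real (n choose j) = (real j + b * (real n - real j)) / real n"
proof -
  have c: "coeff (ss_factor n b) j
      = b * real ((n - 1) choose j) + (if j = 0 then 0 else real ((n - 1) choose (j - 1)))"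
    unfolding ss_factor_def by (cases j) (simp_all add: coeff_one_plus_x_power)
  have e1: "real n * real ((n - 1) choose j) = (real n - real j) * real (n choose j)"
    using binomial_absorb_comp[of n j] assms by (metis of_nat_diff of_nat_mult)
  have e2: "real n * real ((n - 1) choose (j - 1)) = real j * real (n choose j)" if "j \<noteq> 0"
    using times_binomial_minus1_eq[of j n] that by (metis of_nat_mult gr0I)
  have "real n * coeff (ss_factor n b) j = b * (real n * real ((n - 1) choose j))
      + (if j = 0 then 0 else real n * real ((n - 1) choose (j - 1)))"
    unfolding c by (simp add: algebra_simps)
  also have "\<dots> = b * ((real n - real j) * real (n choose j)) + real j * real (n choose j)"
    using e1 e2 by (cases "j = 0") auto
  finally have "real n * coeff (ss_factor n b) j = (real j + b * (real n - real j)) * real (n choose j)"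
    by (simp add: algebra_simps)
  then show ?thesis using assms by (simp add: field_simps)
qed

lemma binomial_mult_falling_ratio:
  assumes "s \<le> n" "j \<le> n"
  shows "real (n choose j) * (\<Prod>k<s. (real j - real k) / (real n - real k))
       = (if s \<le> j then real ((n - s) choose (j - s)) else 0)"
proof -
  have falling: "(\<Prod>k<s. real a - real k) = fact s * real (a choose s)" for a
    using gbinomial_mult_fact[of s "real a"] by (simp add: binomial_gbinomial atLeast0LessThan)
  have "real (n choose s) \<noteq> 0" using assms(1) by simp
  then have "real (n choose j) * (\<Prod>k<s. (real j - real k) / (real n - real k))
      = real (n choose j) * real (j choose s) / real (n choose s)"
    by (simp add: prod_dividef falling)
  also have "\<dots> = (if s \<le> j then real ((n - s) choose (j - s)) else 0)"
    using choose_mult[of s j n] assms \<open>real (n choose s) \<noteq> 0\<close>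
    by (auto simp: field_simps binomial_eq_0 simp flip: of_nat_mult)
  finally show ?thesis .
qed

lemma coeff_ss_comp_list_factors:
  fixes n l \<mu> :: nat
  assumes "1 \<le> l" "\<mu> < n" "j \<le> n"
  shows "coeff (ss_comp_list n (replicate l (ss_factor n 0)
                   @ map (\<lambda>j. ss_factor n (bcoef n j)) [1..<\<mu> + 1])) j
    = (real j / real n) ^ (l - 1)
        * (real (n choose j) * (\<Prod>k<\<mu> + 1. (real j - real k) / (real n - real k)))"
proof -
  define g where "g p = coeff p j / real (n choose j)" for p
  have g: "g (ss_factor n (bcoef n k)) = (real j - real k) / (real n - real k)" if "k < n" for k
  proof -
    have "g (ss_factor n (bcoef n k)) = (real j + bcoef n k * (real n - real j)) / real n"
      using coeff_ss_factor[of n j] that assms(3) unfolding g_def by simp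
    also have "\<dots> = (real j - real k) / (real n - real k)"
      using that unfolding bcoef_def by (simp add: field_simps)
    finally show ?thesis .
  qed
  have "bcoef n 0 = 0" by (simp add: bcoef_def)
  then have "g (ss_factor n 0) = real j / real n" using g[of 0] assms(2) by simp
  moreover have "prod_list (map g (map (\<lambda>j. ss_factor n (bcoef n j)) [1..<\<mu> + 1]))
      = (\<Prod>k\<in>{1..<\<mu> + 1}. (real j - real k) / (real n - real k))"
    using prod.distinct_set_conv_list[of "[1..<\<mu> + 1]" "\<lambda>k. g (ss_factor n (bcoef n k))"] g assms(2)
    by (simp add: o_def del: upt_Suc)
  ultimately have "prod_list (map g (replicate l (ss_factor n 0)
                   @ map (\<lambda>j. ss_factor n (bcoef n j)) [1..<\<mu> + 1]))
      = (real j / real n) ^ (l - 1) * (\<Prod>k<\<mu> + 1. (real j - real k) / (real n - real k))"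
    using assms(1) prod.atLeast_Suc_lessThan[of 0 "\<mu> + 1" "\<lambda>k. (real j - real k) / (real n - real k)"]
    by (simp add: prod_list_replicate atLeast0LessThan power_eq_if del: upt_Suc)
  then show ?thesis
    using assms(3) unfolding coeff_ss_comp_list g_def by (simp add: mult.left_commute)
qed

definition euler_op :: "'a::{comm_semiring_1,semiring_no_zero_divisors} poly \<Rightarrow> 'a poly" where
  "euler_op p = [:0, 1:] * pderiv p"

lemma coeff_euler_op: "coeff (euler_op p) j = of_nat j * coeff p j"
  by (cases j) (simp_all add: euler_op_def coeff_pCons coeff_pderiv)

lemma coeff_euler_op_power: "coeff ((euler_op ^^ k) p) j = of_nat j ^ k * coeff p j"
  by (induction k) (simp_all add: coeff_euler_op mult.assoc)

lemma degree_euler_op_power_le: "degree ((euler_op ^^ k) p) \<le> degree p"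
  by (rule degree_le) (simp add: coeff_euler_op_power coeff_eq_0)

lemma degree_neq_0_if_root:
  assumes "p \<noteq> 0" "poly p x = 0"
  shows "degree p \<noteq> 0"
proof
  assume "degree p = 0"
  then obtain c where "p = [:c:]" by (metis degree_0_id)
  with assms show False by simp
qed

lemma euler_op_eq_0_iff:
  fixes p :: "'a::{idom,semiring_char_0} poly"
  shows "euler_op p = 0 \<longleftrightarrow> degree p = 0"
  by (simp add: euler_op_def pderiv_eq_0_iff)

lemma order_euler_op:
  fixes p :: "'a::{idom,semiring_char_0} poly"
  assumes "p \<noteq> 0" "poly p x = 0"
  shows "order x (euler_op p) = (if x = 0 then order x p else order x p - 1)"
proof -
  have "euler_op p \<noteq> 0"
    using degree_neq_0_if_root[OF assms] by (simp add: euler_op_eq_0_iff)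
  then have "order x (euler_op p) = order x [:0, 1:] + order x (pderiv p)"
    unfolding euler_op_def by (rule order_mult)
  moreover have "order x ([:0, 1:] :: 'a poly) = (if x = 0 then 1 else 0)"
    using order_power_n_n[of "0::'a" 1] by (auto intro: order_0I)
  ultimately show ?thesis
    using order_pderiv[OF assms] by auto
qed

lemma x_power_mult_one_plus_x_power:
  fixes s m :: nat
  defines "P \<equiv> [:0, 1:] ^ s * [:1, 1:] ^ m :: 'a::idom poly"
  shows "P \<noteq> 0" "degree P = s + m" "order 0 P = s" "order (-1) P = m"
proof -
  have x: "order 0 ([:0, 1:] ^ s :: 'a poly) = s" "order (-1) ([:1, 1:] ^ m :: 'a poly) = m"
    using order_power_n_n[of "0::'a" s] order_power_n_n[of "-1::'a" m] by simp_all
  have "order 0 ([:1, 1:] ^ m :: 'a poly) = 0" "order (-1) ([:0, 1:] ^ s :: 'a poly) = 0"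
    by (simp_all add: order_0I)
  then show "P \<noteq> 0" "degree P = s + m" "order 0 P = s" "order (-1) P = m"
    using x unfolding P_def by (simp_all add: order_mult degree_mult_eq degree_linear_power)
qed

lemma ss_comp_list_eq_euler_op_power:
  fixes n l \<mu> :: nat
  assumes "1 \<le> l" "\<mu> < n"
  shows "ss_comp_list n (replicate l (ss_factor n 0)
                   @ map (\<lambda>j. ss_factor n (bcoef n j)) [1..<\<mu> + 1])
    = smult (1 / real n ^ (l - 1))
        ((euler_op ^^ (l - 1)) ([:0, 1:] ^ (\<mu> + 1) * [:1, 1:] ^ (n - (\<mu> + 1))))"
    (is "?U = smult _ ((euler_op ^^ _) ?P)")
proof (rule poly_eqI)
  fix j
  have P: "coeff ?P j = (if \<mu> + 1 \<le> j then real ((n - (\<mu> + 1)) choose (j - (\<mu> + 1))) else 0)"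
    by (simp add: monom_altdef[of 1, simplified, symmetric] coeff_monom_mult coeff_one_plus_x_power
        del: One_nat_def)
  show "coeff ?U j = coeff (smult (1 / real n ^ (l - 1)) ((euler_op ^^ (l - 1)) ?P)) j"
  proof (cases "j \<le> n")
    case True
    have "coeff ?U j = (real j / real n) ^ (l - 1)
        * (real (n choose j) * (\<Prod>k<\<mu> + 1. (real j - real k) / (real n - real k)))"
      by (rule coeff_ss_comp_list_factors[OF assms True])
    also have "\<dots> = (real j / real n) ^ (l - 1) * coeff ?P j"
      unfolding P using binomial_mult_falling_ratio[of "\<mu> + 1" n j] assms True by simp
    finally show ?thesis by (simp add: coeff_euler_op_power power_divide)
  next
    case False
    then show ?thesis
      unfolding coeff_smult coeff_euler_op_power P using assms(2) by (simp add: coeff_ss_comp_list)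
  qed
qed

lemma pderiv_roots_between:
  fixes p :: "real poly"
  assumes "finite A" "card A = Suc k" "\<forall>x\<in>A. poly p x = 0"
  shows "\<exists>S. finite S \<and> S \<subseteq> {Min A<..<Max A} \<and> card S = k \<and> (\<forall>x\<in>S. poly (pderiv p) x = 0)"
  using assms
proof (induction k arbitrary: A)
  case 0
  then show ?case by (intro exI[of _ "{}"]) auto
next
  case (Suc k)
  define b where "b = Max A"
  define A' where "A' = A - {b}"
  define a where "a = Max A'"
  have "A \<noteq> {}" using Suc.prems by auto
  then have b: "b \<in> A" unfolding b_def using Suc.prems(1) by simp
  have A': "finite A'" "card A' = Suc k" "\<forall>x\<in>A'. poly p x = 0"
    using Suc.prems b unfolding A'_def by auto
  then have "A' \<noteq> {}" by auto
  then have a: "a \<in> A'" unfolding a_def using A'(1) by simp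
  have "a < b"
    using a Suc.prems(1) unfolding A'_def b_def by (simp add: order.not_eq_order_implies_strict)
  have "Min A' = Min A"
  proof (rule antisym)
    have "Min A \<le> a" using a Suc.prems(1) unfolding A'_def by simp
    then have "Min A \<in> A'" using \<open>A \<noteq> {}\<close> \<open>a < b\<close> Suc.prems(1) unfolding A'_def by auto
    then show "Min A' \<le> Min A" using A'(1) by simp
    show "Min A \<le> Min A'" using \<open>A' \<noteq> {}\<close> A'(1) Suc.prems(1) unfolding A'_def by simp
  qed
  obtain S where S: "finite S" "S \<subseteq> {Min A<..<a}" "card S = k" "\<forall>x\<in>S. poly (pderiv p) x = 0"
    using Suc.IH[OF A'] \<open>Min A' = Min A\<close> unfolding a_def by auto
  obtain z where z: "a < z" "z < b" "poly p b - poly p a = (b - a) * poly (pderiv p) z"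
    using poly_MVT[OF \<open>a < b\<close>] by blast
  have "poly (pderiv p) z = 0"
    using z(3) \<open>a < b\<close> a b A'(3) Suc.prems(3) by simp
  moreover have "z \<notin> S" using S(2) z(1) by auto
  moreover have "Min A < z"
    using Min_le[OF A'(1) a] \<open>Min A' = Min A\<close> z(1) by simp
  then have "insert z S \<subseteq> {Min A<..<Max A}"
    using S(2) z unfolding b_def by auto
  ultimately show ?case using S by (intro exI[of _ "insert z S"]) auto
qed

lemma euler_op_gains_root:
  fixes p :: "real poly"
  assumes "poly p (-1) = 0" "poly p 0 = 0"
    and "finite S" "S \<subseteq> {-1<..<0}" "\<forall>x\<in>S. poly p x = 0"
  shows "\<exists>S'. finite S' \<and> S' \<subseteq> {-1<..<0} \<and> card S' = Suc (card S)
           \<and> (\<forall>x\<in>S'. poly (euler_op p) x = 0)"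
proof -
  define A where "A = insert (-1) (insert 0 S)"
  have "-1 \<notin> insert 0 S" "0 \<notin> S" using assms(4) by auto
  then have A: "finite A" "card A = Suc (Suc (card S))" "\<forall>x\<in>A. poly p x = 0"
    using assms unfolding A_def by auto
  have "Min A = -1" using A(1) assms(4) unfolding A_def by (intro Min_eqI) auto
  moreover have "Max A = 0" using A(1) assms(4) unfolding A_def by (intro Max_eqI) auto
  ultimately obtain S' where "finite S'" "S' \<subseteq> {-1<..<0}" "card S' = Suc (card S)"
      "\<forall>x\<in>S'. poly (pderiv p) x = 0"
    using pderiv_roots_between[OF A] by auto
  then show ?thesis by (intro exI[of _ S']) (simp add: euler_op_def)
qed

lemma euler_op_power_roots:
  fixes p :: "real poly"
  assumes "p \<noteq> 0" "poly p 0 = 0" "k \<le> order (-1) p"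
  shows "(euler_op ^^ k) p \<noteq> 0
    \<and> order 0 ((euler_op ^^ k) p) = order 0 p
    \<and> order (-1) ((euler_op ^^ k) p) = order (-1) p - k
    \<and> (\<exists>S. finite S \<and> S \<subseteq> {-1<..<0} \<and> card S = k \<and> (\<forall>x\<in>S. poly ((euler_op ^^ k) p) x = 0))"
  using assms(3)
proof (induction k)
  case 0
  then show ?case using assms(1) by (intro conjI exI[of _ "{}"]) auto
next
  case (Suc k)
  define q where "q = (euler_op ^^ k) p"
  obtain S where IH: "q \<noteq> 0" "order 0 q = order 0 p" "order (-1) q = order (-1) p - k"
      and S: "finite S" "S \<subseteq> {-1<..<0}" "card S = k" "\<forall>x\<in>S. poly q x = 0"
    using Suc unfolding q_def by auto
  have "poly q 0 = 0" using IH(2) assms(1,2) by (simp add: order_root)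
  moreover have "poly q (-1) = 0" using IH(3) Suc.prems by (simp add: order_root)
  ultimately have "euler_op q \<noteq> 0"
    "order 0 (euler_op q) = order 0 p" "order (-1) (euler_op q) = order (-1) p - Suc k"
    and "\<exists>S'. finite S' \<and> S' \<subseteq> {-1<..<0} \<and> card S' = Suc k \<and> (\<forall>x\<in>S'. poly (euler_op q) x = 0)"
    using IH S degree_neq_0_if_root[OF IH(1)] euler_op_gains_root[OF _ _ S(1,2,4)]
    by (auto simp: euler_op_eq_0_iff order_euler_op)
  then show ?case unfolding q_def by simp
qed

lemma sum_order_le_degree_finite:
  fixes P :: "'a::idom poly"
  assumes "P \<noteq> 0" "finite F"
  shows "(\<Sum>x\<in>F. order x P) \<le> degree P"
proof -
  let ?R = "{x. poly P x = 0}"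
  have "(\<Sum>x\<in>F. order x P) = (\<Sum>x\<in>F \<inter> ?R. order x P)"
    by (rule sum.mono_neutral_right) (use assms in \<open>auto simp: order_root\<close>)
  also have "\<dots> \<le> (\<Sum>x\<in>?R. order x P)"
    by (rule sum_mono2[OF poly_roots_finite[OF assms(1)]]) auto
  also have "\<dots> \<le> degree P" by (rule sum_order_le_degree[OF assms(1)])
  finally show ?thesis .
qed

lemma roots_simple_if_degree_le:
  fixes P :: "'a::idom poly"
  assumes "P \<noteq> 0" "finite S" "finite T" "S \<inter> T = {}" "\<forall>x\<in>S. poly P x = 0"
    and deg: "degree P \<le> card S + (\<Sum>x\<in>T. order x P)"
  shows "{x. poly P x = 0} \<subseteq> S \<union> T" "\<forall>x\<in>S. order x P = 1"
proof -
  have pos: "1 \<le> order x P" if "x \<in> S" for x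
    using that assms(1,5) by (simp add: order_root Suc_le_eq)
  have ST: "(\<Sum>x\<in>S \<union> T. order x P) = (\<Sum>x\<in>S. order x P) + (\<Sum>x\<in>T. order x P)"
    using assms(2-4) by (rule sum.union_disjoint)
  show "{x. poly P x = 0} \<subseteq> S \<union> T"
  proof
    fix x assume "x \<in> {x. poly P x = 0}"
    then have "1 \<le> order x P" using assms(1) by (simp add: order_root Suc_le_eq)
    show "x \<in> S \<union> T"
    proof (rule ccontr)
      assume "x \<notin> S \<union> T"
      then have "order x P + (\<Sum>y\<in>S \<union> T. order y P) \<le> degree P"
        using sum_order_le_degree_finite[OF assms(1), of "insert x (S \<union> T)"] assms(2,3) by simp
      moreover have "card S \<le> (\<Sum>y\<in>S. order y P)"
        using sum_mono[of S "\<lambda>_. 1" "\<lambda>y. order y P"] pos by simp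
      ultimately show False using \<open>1 \<le> order x P\<close> ST deg by linarith
    qed
  qed
  show "\<forall>x\<in>S. order x P = 1"
  proof (rule ccontr)
    assume "\<not> (\<forall>x\<in>S. order x P = 1)"
    then have "\<exists>x\<in>S. 1 < order x P" using pos by fastforce
    then have "(\<Sum>x\<in>S. 1) < (\<Sum>x\<in>S. order x P)"
      using pos assms(2) by (intro sum_strict_mono_ex1) auto
    moreover have "(\<Sum>x\<in>S \<union> T. order x P) \<le> degree P"
      using sum_order_le_degree_finite[OF assms(1)] assms(2,3) by simp
    ultimately show False using ST deg by simp
  qed
qed

theorem proposition4p1:
  fixes n l \<mu> :: nat
  assumes "n \<ge> 2" and "l \<ge> 1" and "l + \<mu> \<le> n"
  defines "U \<equiv> ss_comp_list n (replicate l (ss_factor n 0)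
                   @ map (\<lambda>j. ss_factor n (bcoef n j)) [1..<\<mu> + 1])"
  shows "U \<noteq> 0
    \<and> order 0 U = \<mu> + 1
    \<and> order (-1) U = n - \<mu> - l
    \<and> card {x::real. -1 < x \<and> x < 0 \<and> poly U x = 0} = l - 1
    \<and> (\<forall>x::real. -1 < x \<and> x < 0 \<and> poly U x = 0 \<longrightarrow> order x U = 1)"
proof -
  define P0 :: "real poly" where "P0 = [:0, 1:] ^ (\<mu> + 1) * [:1, 1:] ^ (n - (\<mu> + 1))"
  define P where "P = (euler_op ^^ (l - 1)) P0"
  have U: "U = smult (1 / real n ^ (l - 1)) P" and "real n \<noteq> 0"
    using ss_comp_list_eq_euler_op_power[of l \<mu> n] assms unfolding U_def P_def P0_def by auto
  note P0 = x_power_mult_one_plus_x_power[where 'a = real, of "\<mu> + 1" "n - (\<mu> + 1)", folded P0_def]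
  have "poly P0 0 = 0" using P0(1,3) by (simp add: order_root)
  moreover have "l - 1 \<le> order (-1) P0" using P0(4) assms(3) by simp
  ultimately have "P \<noteq> 0 \<and> order 0 P = order 0 P0 \<and> order (-1) P = order (-1) P0 - (l - 1)
      \<and> (\<exists>S. finite S \<and> S \<subseteq> {-1<..<0} \<and> card S = l - 1 \<and> (\<forall>x\<in>S. poly P x = 0))"
    unfolding P_def by (rule euler_op_power_roots[OF P0(1)])
  then obtain S where P: "P \<noteq> 0" "order 0 P = \<mu> + 1" "order (-1) P = n - \<mu> - l"
      and S: "finite S" "S \<subseteq> {-1<..<0}" "card S = l - 1" "\<forall>x\<in>S. poly P x = 0"
    using P0(3,4) assms(2) by auto
  have "degree P \<le> card S + (\<Sum>x\<in>{0, -1}. order x P)"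
    using degree_euler_op_power_le[of "l - 1" P0, folded P_def] P0(2) P(2,3) S(3) assms by simp
  moreover have "finite {0::real, -1}" "S \<inter> {0, -1} = {}" using S(2) by auto
  ultimately have "{x. poly P x = 0} \<subseteq> S \<union> {0, -1}" "\<forall>x\<in>S. order x P = 1"
    using roots_simple_if_degree_le[OF P(1) S(1) _ _ S(4)] by blast+
  then have "{x. -1 < x \<and> x < 0 \<and> poly U x = 0} = S" "\<forall>x\<in>S. order x U = 1"
    using S(2,4) U \<open>real n \<noteq> 0\<close> by (auto simp: order_smult)
  then show ?thesis
    using P S(3) U \<open>real n \<noteq> 0\<close> by (auto simp: order_smult)
qed

end
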